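(* Let $S$ be a monoid. Then (1) the ternary commutator $[1,1,1]$ is the smallest congruence $\delta$ of $S$ such that $S/\delta$ embeds into a $2$-nilpotent group; (2) $[1,1,1]$ equals the smallest cancellative congruence of $S$ containing $[[1,1],1]\vee[1,[1,1]]$, equals the smallest cancellative congruence containing $[[1,1],1]$, and equals the smallest cancellative congruence containing $\rho_2$.
   Context: Commutators are those of the semigroup $(S,\cdot)$: for congruences $\alpha_1,\dots,\alpha_k$, $M(\alpha_1,\dots,\alpha_k)$ is the subsemigroup of $S^{\{0,1\}^k}$ generated by all $g$ such that for some $i$ and $(a,b)\in\alpha_i$, $g(x)=a$ if $x_i=0$ and $g(x)=b$ if $x_i=1$; $[\alpha_1,\dots,\alpha_k]$ is the smallest congruence $\delta$ such that for all $f\in M(\alpha_1,\dots,\alpha_k)$: if $(f(x0),f(x1))\in\delta$ for all $x\in\{0,1\}^{k-1}\setminus\{(1,\dots,1)\}$ then $(f(1,\dots,1,0),f(1,\dots,1,1))\in\delta$. $1$ is the total congruence. A congruence $\sigma$ is cancellative if $S/\sigma$ is cancellative. $q_1(x,y,z)=xy$, $q_2(x,y,z)=xyz_1yx$, and $\rho_2$ is the congruence generated by all pairs $(xyz_1yx,\ yxz_1xy)$ with $x,y,z_1\in S$. A $2$-nilpotent group has nilpotency class at most $2$. *)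

theory Defs
  imports Main "HOL-Algebra.Group"
begin

definition is_cong :: "('a::monoid_mult \<times> 'a) set \<Rightarrow> bool" where
  "is_cong \<theta> \<longleftrightarrow> equiv UNIV \<theta> \<and>
     (\<forall>a b c d. (a, b) \<in> \<theta> \<longrightarrow> (c, d) \<in> \<theta> \<longrightarrow> (a * c, b * d) \<in> \<theta>)"

definition cong_gen :: "('a::monoid_mult \<times> 'a) set \<Rightarrow> ('a \<times> 'a) set" where
  "cong_gen R = \<Inter>{\<theta>. is_cong \<theta> \<and> R \<subseteq> \<theta>}"

definition cong_join :: "('a::monoid_mult \<times> 'a) set \<Rightarrow> ('a \<times> 'a) set \<Rightarrow> ('a \<times> 'a) set" where
  "cong_join \<alpha> \<beta> = cong_gen (\<alpha> \<union> \<beta>)"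

definition total_cong :: "('a::monoid_mult \<times> 'a) set" where
  "total_cong = UNIV"

text \<open>Points of the cube {0,1}^k are bool lists of length k (False = 0, True = 1).
  Elements of S^{{0,1}^k} are functions on bool lists; values outside length k are fixed to 1.\<close>

definition comm_gens :: "('a::monoid_mult \<times> 'a) set list \<Rightarrow> (bool list \<Rightarrow> 'a) set" where
  "comm_gens \<alpha>s = {g. \<exists>i < length \<alpha>s. \<exists>a b. (a, b) \<in> \<alpha>s ! i \<and>
      g = (\<lambda>x. if length x = length \<alpha>s then (if x ! i then b else a) else 1)}"

inductive_set comm_M :: "('a::monoid_mult \<times> 'a) set list \<Rightarrow> (bool list \<Rightarrow> 'a) set"
  for \<alpha>s where
  gen: "g \<in> comm_gens \<alpha>s \<Longrightarrow> g \<in> comm_M \<alpha>s"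
| mult: "f \<in> comm_M \<alpha>s \<Longrightarrow> g \<in> comm_M \<alpha>s \<Longrightarrow> (\<lambda>x. f x * g x) \<in> comm_M \<alpha>s"

definition term_cond :: "('a::monoid_mult \<times> 'a) set list \<Rightarrow> ('a \<times> 'a) set \<Rightarrow> bool" where
  "term_cond \<alpha>s \<delta> \<longleftrightarrow> (\<forall>f \<in> comm_M \<alpha>s.
     (\<forall>x. length x = length \<alpha>s - 1 \<and> x \<noteq> replicate (length \<alpha>s - 1) True
          \<longrightarrow> (f (x @ [False]), f (x @ [True])) \<in> \<delta>)
     \<longrightarrow> (f (replicate (length \<alpha>s - 1) True @ [False]),
          f (replicate (length \<alpha>s - 1) True @ [True])) \<in> \<delta>)"

definition commutator :: "('a::monoid_mult \<times> 'a) set list \<Rightarrow> ('a \<times> 'a) set" where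
  "commutator \<alpha>s = \<Inter>{\<delta>. is_cong \<delta> \<and> term_cond \<alpha>s \<delta>}"

definition cancellative_cong :: "('a::monoid_mult \<times> 'a) set \<Rightarrow> bool" where
  "cancellative_cong \<sigma> \<longleftrightarrow> is_cong \<sigma> \<and>
     (\<forall>a b c. (a * c, b * c) \<in> \<sigma> \<longrightarrow> (a, b) \<in> \<sigma>) \<and>
     (\<forall>a b c. (c * a, c * b) \<in> \<sigma> \<longrightarrow> (a, b) \<in> \<sigma>)"

definition canc_gen :: "('a::monoid_mult \<times> 'a) set \<Rightarrow> ('a \<times> 'a) set" where
  "canc_gen R = \<Inter>{\<sigma>. cancellative_cong \<sigma> \<and> R \<subseteq> \<sigma>}"

definition rho2 :: "('a::monoid_mult \<times> 'a) set" where
  "rho2 = cong_gen {(x * y * z * y * x, y * x * z * x * y) | x y z. True}"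

definition nilpotent2_group :: "('g, 'b) monoid_scheme \<Rightarrow> bool" where
  "nilpotent2_group G \<longleftrightarrow> group G \<and>
     (\<forall>x \<in> carrier G. \<forall>y \<in> carrier G. \<forall>z \<in> carrier G.
        (inv\<^bsub>G\<^esub> x \<otimes>\<^bsub>G\<^esub> inv\<^bsub>G\<^esub> y \<otimes>\<^bsub>G\<^esub> x \<otimes>\<^bsub>G\<^esub> y) \<otimes>\<^bsub>G\<^esub> z
        = z \<otimes>\<^bsub>G\<^esub> (inv\<^bsub>G\<^esub> x \<otimes>\<^bsub>G\<^esub> inv\<^bsub>G\<^esub> y \<otimes>\<^bsub>G\<^esub> x \<otimes>\<^bsub>G\<^esub> y))"

text \<open>S/delta embeds into G: a semigroup homomorphism S -> G whose kernel is exactly delta.\<close>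
definition quot_embeds_into :: "('a::monoid_mult \<times> 'a) set \<Rightarrow> ('g, 'b) monoid_scheme \<Rightarrow> bool" where
  "quot_embeds_into \<delta> G \<longleftrightarrow> (\<exists>h. (\<forall>x. h x \<in> carrier G) \<and>
     (\<forall>x y. h (x * y) = h x \<otimes>\<^bsub>G\<^esub> h y) \<and>
     (\<forall>x y. h x = h y \<longleftrightarrow> (x, y) \<in> \<delta>))"

end

(* Write T = [1,1,1]. The ternary term condition, applied to suitable products of generators
   of M(1,1,1), shows that S/T is cancellative and satisfies Mal'cev's identity
   xyzyx = yxzxy. Its instance z = 1 is an Ore condition, so S/T has a group of right
   fractions, and the identity makes that group nilpotent of class two.
   Conversely, in a class-two group G the image of any f in M(a,b,c) on the cube has the normal
   form A(x1) B(x2) C(x3) P(x1,x2) Q(x1,x3) R(x2,x3) with P, Q, R central, which gives the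
   ternary term condition for the kernel of every homomorphism S -> G; hence T is the least
   congruence with S/T embeddable into such a group. Modulo the centre G is abelian, so [1,1]
   maps into the centre; this puts [[1,1],1] and [1,[1,1]] below T. Finally the Mal'cev pairs
   already lie in [[1,1],1] and in rho2, so every cancellative congruence containing either
   of them contains T. *)

theory Submission
  imports Defs "HOL-Library.Function_Algebras"
begin

section \<open>Congruences and commutators\<close>

lemma is_cong_iff:
  "is_cong \<theta> \<longleftrightarrow> (\<forall>a. (a, a) \<in> \<theta>) \<and> (\<forall>a b. (a, b) \<in> \<theta> \<longrightarrow> (b, a) \<in> \<theta>) \<and>
     (\<forall>a b c. (a, b) \<in> \<theta> \<longrightarrow> (b, c) \<in> \<theta> \<longrightarrow> (a, c) \<in> \<theta>) \<and>
     (\<forall>a b c d. (a, b) \<in> \<theta> \<longrightarrow> (c, d) \<in> \<theta> \<longrightarrow> (a * c, b * d) \<in> \<theta>)"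
  unfolding is_cong_def equiv_def refl_on_def sym_on_def trans_on_def by simp

lemma is_congI:
  assumes "\<And>a. (a, a) \<in> \<theta>" "\<And>a b. (a, b) \<in> \<theta> \<Longrightarrow> (b, a) \<in> \<theta>"
    "\<And>a b c. (a, b) \<in> \<theta> \<Longrightarrow> (b, c) \<in> \<theta> \<Longrightarrow> (a, c) \<in> \<theta>"
    "\<And>a b c d. (a, b) \<in> \<theta> \<Longrightarrow> (c, d) \<in> \<theta> \<Longrightarrow> (a * c, b * d) \<in> \<theta>"
  shows "is_cong (\<theta> :: ('a::monoid_mult \<times> 'a) set)"
  using assms unfolding is_cong_iff by blast

lemma is_congD:
  assumes "is_cong \<theta>"
  shows is_cong_refl: "(a, a) \<in> \<theta>"
    and is_cong_sym: "(a, b) \<in> \<theta> \<Longrightarrow> (b, a) \<in> \<theta>"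
    and is_cong_trans: "(a, b) \<in> \<theta> \<Longrightarrow> (b, c) \<in> \<theta> \<Longrightarrow> (a, c) \<in> \<theta>"
    and is_cong_mult: "(a, b) \<in> \<theta> \<Longrightarrow> (c, d) \<in> \<theta> \<Longrightarrow> (a * c, b * d) \<in> \<theta>"
  using assms unfolding is_cong_iff by blast+

lemma is_cong_Inter: "(\<And>\<theta>. \<theta> \<in> A \<Longrightarrow> is_cong \<theta>) \<Longrightarrow> is_cong (\<Inter>A)"
  by (rule is_congI) (auto dest: is_congD)

lemma is_cong_kernel:
  assumes "\<And>x y. h (x * y) = f (h x) (h y)"
  shows "is_cong {(x :: 'a::monoid_mult, y). h x = h y}"
  by (rule is_congI) (auto simp: assms)

lemma is_cong_commutator: "is_cong (commutator \<alpha>s)"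
  unfolding commutator_def by (rule is_cong_Inter) auto

lemma term_cond_commutator: "term_cond \<alpha>s (commutator \<alpha>s)"
  unfolding term_cond_def commutator_def by blast

lemma commutator_least: "is_cong \<delta> \<Longrightarrow> term_cond \<alpha>s \<delta> \<Longrightarrow> commutator \<alpha>s \<subseteq> \<delta>"
  unfolding commutator_def by blast

lemma cong_gen_upper: "R \<subseteq> cong_gen R"
  unfolding cong_gen_def by blast

lemma cong_gen_least: "is_cong \<theta> \<Longrightarrow> R \<subseteq> \<theta> \<Longrightarrow> cong_gen R \<subseteq> \<theta>"
  unfolding cong_gen_def by blast

lemma cancellative_cong_canc_gen: "cancellative_cong (canc_gen R)"
proof -
  have "is_cong (canc_gen R)"
    unfolding canc_gen_def by (rule is_cong_Inter) (simp add: cancellative_cong_def)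
  moreover have "(a, b) \<in> canc_gen R" if "(a * c, b * c) \<in> canc_gen R" for a b c
    using that unfolding canc_gen_def cancellative_cong_def by blast
  moreover have "(a, b) \<in> canc_gen R" if "(c * a, c * b) \<in> canc_gen R" for a b c
    using that unfolding canc_gen_def cancellative_cong_def by blast
  ultimately show ?thesis unfolding cancellative_cong_def by blast
qed

lemma cancellative_congD:
  assumes "cancellative_cong \<sigma>"
  shows cancellative_cong_is_cong: "is_cong \<sigma>"
    and cancellative_cong_cancel_right: "(a * c, b * c) \<in> \<sigma> \<Longrightarrow> (a, b) \<in> \<sigma>"
    and cancellative_cong_cancel_left: "(c * a, c * b) \<in> \<sigma> \<Longrightarrow> (a, b) \<in> \<sigma>"
  using assms unfolding cancellative_cong_def by blast+

lemma canc_gen_upper: "R \<subseteq> canc_gen R"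
  unfolding canc_gen_def by blast

lemma canc_gen_least: "cancellative_cong \<theta> \<Longrightarrow> R \<subseteq> \<theta> \<Longrightarrow> canc_gen R \<subseteq> \<theta>"
  unfolding canc_gen_def by blast

lemma canc_gen_eqI:
  assumes "cancellative_cong \<theta>" "R \<subseteq> \<theta>"
    and "\<And>\<sigma>. cancellative_cong \<sigma> \<Longrightarrow> R \<subseteq> \<sigma> \<Longrightarrow> \<theta> \<subseteq> \<sigma>"
  shows "\<theta> = canc_gen R"
proof
  show "canc_gen R \<subseteq> \<theta>" using assms(1,2) by (rule canc_gen_least)
  show "\<theta> \<subseteq> canc_gen R" by (rule assms(3)[OF cancellative_cong_canc_gen canc_gen_upper])
qed

definition comm_gen :: "nat \<Rightarrow> nat \<Rightarrow> 'a \<Rightarrow> 'a \<Rightarrow> bool list \<Rightarrow> 'a::monoid_mult" where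
  "comm_gen k i a b = (\<lambda>x. if length x = k then if x ! i then b else a else 1)"

lemma comm_gen_apply [simp]:
  "comm_gen k i a b x = (if length x = k then if x ! i then b else a else 1)"
  by (simp add: comm_gen_def)

lemma comm_gen_in_comm_M:
  "length \<alpha>s = k \<Longrightarrow> i < k \<Longrightarrow> (a, b) \<in> \<alpha>s ! i \<Longrightarrow> comm_gen k i a b \<in> comm_M \<alpha>s"
  by (rule comm_M.gen) (auto simp: comm_gens_def comm_gen_def)

lemma comm_M_induct [consumes 1, case_names gen mult]:
  assumes "f \<in> comm_M \<alpha>s"
    and "\<And>i a b. i < length \<alpha>s \<Longrightarrow> (a, b) \<in> \<alpha>s ! i \<Longrightarrow> P (comm_gen (length \<alpha>s) i a b)"
    and "\<And>f g. f \<in> comm_M \<alpha>s \<Longrightarrow> g \<in> comm_M \<alpha>s \<Longrightarrow> P f \<Longrightarrow> P g \<Longrightarrow> P (f * g)"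
  shows "P f"
  using assms(1)
proof (induction rule: comm_M.induct)
  case (gen g)
  then show ?case using assms(2) by (auto simp: comm_gens_def comm_gen_def[symmetric])
next
  case (mult f g)
  then show ?case using assms(3) by (simp add: times_fun_def)
qed

lemma comm_M_times: "f \<in> comm_M \<alpha>s \<Longrightarrow> g \<in> comm_M \<alpha>s \<Longrightarrow> f * g \<in> comm_M \<alpha>s"
  unfolding times_fun_def by (rule comm_M.mult)

lemma comm_gen_total_in_comm_M:
  "length \<alpha>s = k \<Longrightarrow> i < k \<Longrightarrow> \<alpha>s ! i = total_cong \<Longrightarrow> comm_gen k i a b \<in> comm_M \<alpha>s"
  by (rule comm_gen_in_comm_M) (simp_all add: total_cong_def)

lemma term_cond2_iff:
  "term_cond [\<alpha>, \<beta>] \<delta> \<longleftrightarrow>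
     (\<forall>f \<in> comm_M [\<alpha>, \<beta>]. (f [False, False], f [False, True]) \<in> \<delta>
        \<longrightarrow> (f [True, False], f [True, True]) \<in> \<delta>)"
proof -
  have "length x = 1 \<and> x \<noteq> [True] \<longleftrightarrow> x = [False]" for x :: "bool list"
    by (cases x) auto
  then show ?thesis unfolding term_cond_def by simp
qed

lemma term_cond3_iff:
  "term_cond [\<alpha>, \<beta>, \<gamma>] \<delta> \<longleftrightarrow>
     (\<forall>f \<in> comm_M [\<alpha>, \<beta>, \<gamma>]. (f [False, False, False], f [False, False, True]) \<in> \<delta>
        \<longrightarrow> (f [False, True, False], f [False, True, True]) \<in> \<delta>
        \<longrightarrow> (f [True, False, False], f [True, False, True]) \<in> \<delta>
        \<longrightarrow> (f [True, True, False], f [True, True, True]) \<in> \<delta>)"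
proof -
  have corners: "length x = 2 \<and> x \<noteq> [True, True] \<longleftrightarrow> x \<in> {[False, False], [False, True], [True, False]}"
    for x :: "bool list"
  proof
    assume "length x = 2 \<and> x \<noteq> [True, True]"
    then obtain a b where "x = [a, b]" "x \<noteq> [True, True]"
      by (auto simp: numeral_2_eq_2 length_Suc_conv)
    then show "x \<in> {[False, False], [False, True], [True, False]}" by (cases a; cases b) auto
  qed auto
  have dims: "length [\<alpha>, \<beta>, \<gamma>] - 1 = 2" "replicate 2 True = [True, True]"
    by (simp_all add: numeral_2_eq_2)
  show ?thesis unfolding term_cond_def by (simp only: dims corners) (simp add: all_conj_distrib imp_conjL)
qed

lemma term_cond2_if_commutative:
  assumes canc: "cancellative_cong \<theta>" and comm: "\<And>a b. (a * b, b * a) \<in> \<theta>"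
  shows "term_cond [\<alpha>, \<beta>] \<theta>"
  unfolding term_cond2_iff
proof (intro ballI impI)
  have cong: "is_cong \<theta>" using canc by (rule cancellative_cong_is_cong)
  have middle_swap: "(a * b * (c * d), a * c * (b * d)) \<in> \<theta>" for a b c d
    using is_cong_mult[OF cong is_cong_mult[OF cong is_cong_refl[OF cong] comm] is_cong_refl[OF cong]]
    by (simp add: mult.assoc)
  fix f assume f: "f \<in> comm_M [\<alpha>, \<beta>]" and FF_FT: "(f [False, False], f [False, True]) \<in> \<theta>"
  have "(f [True, x] * f [False, y], f [False, x] * f [True, y]) \<in> \<theta>" for x y
    using f
  proof (induction arbitrary: x y rule: comm_M_induct)
    case (gen i a b)
    then have "i = 0 \<or> i = 1" by (auto simp: less_Suc_eq)
    then show ?case using comm[of b a] is_cong_refl[OF cong] by (elim disjE) simp_all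
  next
    case (mult f g)
    have "((f * g) [True, x] * (f * g) [False, y],
           f [True, x] * f [False, y] * (g [True, x] * g [False, y])) \<in> \<theta>"
      using middle_swap by simp
    moreover have "(f [True, x] * f [False, y] * (g [True, x] * g [False, y]),
                    f [False, x] * f [True, y] * (g [False, x] * g [True, y])) \<in> \<theta>"
      using mult.IH by (rule is_cong_mult[OF cong])
    moreover have "(f [False, x] * f [True, y] * (g [False, x] * g [True, y]),
                    (f * g) [False, x] * (f * g) [True, y]) \<in> \<theta>"
      using middle_swap by simp
    ultimately show ?case by (meson is_cong_trans[OF cong])
  qed
  from this[of False True]
  have "(f [True, False] * f [False, True], f [False, False] * f [True, True]) \<in> \<theta>" .
  moreover have "(f [False, False] * f [True, True], f [True, True] * f [False, True]) \<in> \<theta>"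
    using is_cong_trans[OF cong is_cong_mult[OF cong FF_FT is_cong_refl[OF cong]] comm] .
  ultimately have "(f [True, False] * f [False, True], f [True, True] * f [False, True]) \<in> \<theta>"
    by (rule is_cong_trans[OF cong])
  then show "(f [True, False], f [True, True]) \<in> \<theta>"
    by (rule cancellative_cong_cancel_right[OF canc])
qed

section \<open>The ternary term condition for the total congruence\<close>

lemma term_cond3D:
  assumes "term_cond [\<alpha>, \<beta>, \<gamma>] \<delta>" "f \<in> comm_M [\<alpha>, \<beta>, \<gamma>]"
    "(f [False, False, False], f [False, False, True]) \<in> \<delta>"
    "(f [False, True, False], f [False, True, True]) \<in> \<delta>"
    "(f [True, False, False], f [True, False, True]) \<in> \<delta>"
  shows "(f [True, True, False], f [True, True, True]) \<in> \<delta>"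
  using assms unfolding term_cond3_iff by blast

context
  fixes \<delta> :: "('a::monoid_mult \<times> 'a) set"
  assumes cong: "is_cong \<delta>" and tc: "term_cond [total_cong, total_cong, total_cong] \<delta>"
begin

private lemma comm_gen_total3: "i < 3 \<Longrightarrow> comm_gen 3 i a b \<in> comm_M [total_cong, total_cong, total_cong]"
  by (rule comm_gen_total_in_comm_M) (auto simp: less_Suc_eq numeral_3_eq_3)

lemma term_cond3_total_cancel_right:
  assumes "(a * c, b * c) \<in> \<delta>"
  shows "(a, b) \<in> \<delta>"
proof -
  let ?f = "comm_gen 3 2 a b * comm_gen 3 0 c 1 * comm_gen 3 1 c 1"
  have f: "?f \<in> comm_M [total_cong, total_cong, total_cong]"
    by (intro comm_M_times comm_gen_total3) auto
  have "(a * c * c, b * c * c) \<in> \<delta>" using is_cong_mult[OF cong assms is_cong_refl[OF cong]] .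
  then show ?thesis using term_cond3D[OF tc f] assms by (simp add: mult.assoc)
qed

lemma term_cond3_total_cancel_left:
  assumes "(c * a, c * b) \<in> \<delta>"
  shows "(a, b) \<in> \<delta>"
proof -
  let ?f = "comm_gen 3 0 c 1 * comm_gen 3 1 c 1 * comm_gen 3 2 a b"
  have f: "?f \<in> comm_M [total_cong, total_cong, total_cong]"
    by (intro comm_M_times comm_gen_total3) auto
  have "(c * (c * a), c * (c * b)) \<in> \<delta>" using is_cong_mult[OF cong is_cong_refl[OF cong] assms] .
  then show ?thesis using term_cond3D[OF tc f] assms by (simp add: mult.assoc)
qed

lemma term_cond3_total_cancellative: "cancellative_cong \<delta>"
  unfolding cancellative_cong_def
  using cong term_cond3_total_cancel_right term_cond3_total_cancel_left by blast

lemma term_cond3_total_malcev_one: "(q * p * p * q, p * q * q * p) \<in> \<delta>"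
proof -
  \<comment> \<open>the faces of \<open>?f\<close> over the corners \<open>00, 01, 10, 11\<close> are \<open>(pq, pq)\<close>, \<open>(pqpq, pqpq)\<close>,
    \<open>(pqpq, pqpq)\<close> and \<open>(pqppqq, ppqqpq)\<close>\<close>
  let ?f = "comm_gen 3 2 (p * q) 1 * comm_gen 3 0 1 p * comm_gen 3 1 1 (p * q)
    * comm_gen 3 0 1 q * comm_gen 3 2 1 (p * q)"
  have f: "?f \<in> comm_M [total_cong, total_cong, total_cong]"
    by (intro comm_M_times comm_gen_total3) auto
  have "(?f [True, True, False], ?f [True, True, True]) \<in> \<delta>"
    by (rule term_cond3D[OF tc f]) (simp_all add: is_cong_refl[OF cong] mult.assoc)
  then have "(p * ((q * p * p * q) * q), p * ((p * q * q * p) * q)) \<in> \<delta>"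
    by (simp add: mult.assoc)
  then have "((q * p * p * q) * q, (p * q * q * p) * q) \<in> \<delta>"
    by (rule term_cond3_total_cancel_left)
  then show ?thesis by (rule term_cond3_total_cancel_right)
qed

lemma term_cond3_total_malcev: "(x * y * z * y * x, y * x * z * x * y) \<in> \<delta>"
proof -
  \<comment> \<open>the faces of \<open>?f\<close> are \<open>(xx, xx)\<close>, \<open>(xyyx, yxxy)\<close>, \<open>(xzx, xzx)\<close> and \<open>(xyzyx, yxzxy)\<close>\<close>
  let ?f = "comm_gen 3 2 x 1 * comm_gen 3 1 1 y * comm_gen 3 2 1 x * comm_gen 3 0 1 z
    * comm_gen 3 2 1 x * comm_gen 3 1 1 y * comm_gen 3 2 x 1"
  have f: "?f \<in> comm_M [total_cong, total_cong, total_cong]"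
    by (intro comm_M_times comm_gen_total3) auto
  have "(?f [True, True, False], ?f [True, True, True]) \<in> \<delta>"
    by (rule term_cond3D[OF tc f])
      (simp_all add: is_cong_refl[OF cong] mult.assoc term_cond3_total_malcev_one[of x y, simplified mult.assoc])
  then show ?thesis by (simp add: mult.assoc)
qed

end

lemma cancellative_commutator3_total:
  "cancellative_cong (commutator [total_cong, total_cong, total_cong])"
  using is_cong_commutator term_cond_commutator by (rule term_cond3_total_cancellative)

lemma malcev_in_commutator3_total:
  "(x * y * z * y * x, y * x * z * x * y) \<in> commutator [total_cong, total_cong, total_cong]"
  using is_cong_commutator term_cond_commutator by (rule term_cond3_total_malcev)

lemma swap_in_commutator2: "(x * y, y * x) \<in> commutator [total_cong, total_cong]"
proof -
  let ?C = "commutator [total_cong, total_cong]"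
  let ?f = "comm_gen 2 1 x 1 * comm_gen 2 0 1 y * comm_gen 2 1 1 x"
  have "?f \<in> comm_M [total_cong, total_cong]"
    by (intro comm_M_times comm_gen_total_in_comm_M) auto
  moreover have "(?f [False, False], ?f [False, True]) \<in> ?C"
    by (simp add: is_cong_refl[OF is_cong_commutator])
  ultimately have "(?f [True, False], ?f [True, True]) \<in> ?C"
    using term_cond_commutator[of "[total_cong, total_cong]"] unfolding term_cond2_iff by blast
  then show ?thesis by simp
qed

lemma malcev_in_commutator_comm_total:
  "(x * y * z * y * x, y * x * z * x * y)
     \<in> commutator [commutator [total_cong, total_cong], total_cong]"
proof -
  let ?C = "commutator [total_cong, total_cong]"
  let ?D = "commutator [?C, total_cong]"
  let ?f = "comm_gen 2 1 (x * y * z) 1 * comm_gen 2 0 (x * y) (y * x) * comm_gen 2 1 1 (z * x * y)"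
  have "?f \<in> comm_M [?C, total_cong]"
    by (intro comm_M_times comm_gen_total_in_comm_M comm_gen_in_comm_M) (auto simp: swap_in_commutator2)
  moreover have "(?f [False, False], ?f [False, True]) \<in> ?D"
    by (simp add: is_cong_refl[OF is_cong_commutator] mult.assoc)
  ultimately have "(?f [True, False], ?f [True, True]) \<in> ?D"
    using term_cond_commutator[of "[?C, total_cong]"] unfolding term_cond2_iff by blast
  then show ?thesis by (simp add: mult.assoc)
qed

section \<open>Groups of nilpotency class two\<close>

definition group_comm :: "('g, 'b) monoid_scheme \<Rightarrow> 'g \<Rightarrow> 'g \<Rightarrow> 'g" where
  "group_comm G x y = inv\<^bsub>G\<^esub> x \<otimes>\<^bsub>G\<^esub> inv\<^bsub>G\<^esub> y \<otimes>\<^bsub>G\<^esub> x \<otimes>\<^bsub>G\<^esub> y"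

definition central :: "('g, 'b) monoid_scheme \<Rightarrow> 'g \<Rightarrow> bool" where
  "central G k \<longleftrightarrow> k \<in> carrier G \<and> (\<forall>g \<in> carrier G. k \<otimes>\<^bsub>G\<^esub> g = g \<otimes>\<^bsub>G\<^esub> k)"

lemma nilpotent2_group_iff:
  "nilpotent2_group G \<longleftrightarrow>
     group G \<and> (\<forall>x \<in> carrier G. \<forall>y \<in> carrier G. central G (group_comm G x y))"
proof (cases "group G")
  case True
  then interpret group G .
  show ?thesis unfolding nilpotent2_group_def central_def group_comm_def by auto
qed (simp add: nilpotent2_group_def)

context group
begin

lemma inv_mult_cancel_left [simp]: "x \<in> carrier G \<Longrightarrow> y \<in> carrier G \<Longrightarrow> inv x \<otimes> (x \<otimes> y) = y"
  by (simp add: m_assoc[symmetric])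

lemma mult_inv_cancel_left [simp]: "x \<in> carrier G \<Longrightarrow> y \<in> carrier G \<Longrightarrow> x \<otimes> (inv x \<otimes> y) = y"
  by (simp add: m_assoc[symmetric])

lemma group_comm_closed [simp]:
  "x \<in> carrier G \<Longrightarrow> y \<in> carrier G \<Longrightarrow> group_comm G x y \<in> carrier G"
  unfolding group_comm_def by simp

lemma central_closed: "central G k \<Longrightarrow> k \<in> carrier G"
  unfolding central_def by blast

lemma central_commute: "central G k \<Longrightarrow> x \<in> carrier G \<Longrightarrow> k \<otimes> x = x \<otimes> k"
  unfolding central_def by blast

lemma central_left_commute:
  "central G k \<Longrightarrow> x \<in> carrier G \<Longrightarrow> y \<in> carrier G \<Longrightarrow> k \<otimes> (x \<otimes> y) = x \<otimes> (k \<otimes> y)"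
  by (metis central_closed central_commute m_assoc)

lemma central_one: "central G \<one>"
  unfolding central_def by simp

lemma central_mult: "central G a \<Longrightarrow> central G b \<Longrightarrow> central G (a \<otimes> b)"
  unfolding central_def by (metis m_assoc m_closed)

lemma commute_inv:
  assumes k: "k \<in> carrier G" and b: "b \<in> carrier G" and kb: "k \<otimes> b = b \<otimes> k"
  shows "k \<otimes> inv b = inv b \<otimes> k"
proof -
  have "inv b \<otimes> (k \<otimes> b) \<otimes> inv b = inv b \<otimes> (b \<otimes> k) \<otimes> inv b" using kb by simp
  then show ?thesis using k b by (simp add: m_assoc)
qed

lemma central_inv: "central G a \<Longrightarrow> central G (inv a)"
  unfolding central_def by (metis commute_inv inv_closed inv_inv)

lemma central_conj: "central G k \<Longrightarrow> y \<in> carrier G \<Longrightarrow> inv y \<otimes> k \<otimes> y = k"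
  by (metis central_closed central_commute inv_closed l_inv m_assoc r_one)

lemma centralI_generated:
  assumes H: "H \<subseteq> carrier G" and gen: "\<And>g. g \<in> carrier G \<Longrightarrow> \<exists>c \<in> H. \<exists>d \<in> H. g = c \<otimes> inv d"
    and k: "k \<in> carrier G" and comm: "\<And>z. z \<in> H \<Longrightarrow> k \<otimes> z = z \<otimes> k"
  shows "central G k"
  unfolding central_def
proof (intro conjI ballI k)
  fix g assume "g \<in> carrier G"
  then obtain c d where cd: "c \<in> H" "d \<in> H" "g = c \<otimes> inv d" using gen by blast
  then have c: "c \<in> carrier G" and d: "d \<in> carrier G" using H by auto
  have kd: "k \<otimes> inv d = inv d \<otimes> k" using commute_inv[OF k d comm[OF cd(2)]] .
  have "k \<otimes> g = (k \<otimes> c) \<otimes> inv d" using cd(3) c d k by (simp add: m_assoc)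
  also have "\<dots> = c \<otimes> (k \<otimes> inv d)" using comm[OF cd(1)] c d k by (simp add: m_assoc)
  also have "\<dots> = g \<otimes> k" using kd cd(3) c d k by (simp add: m_assoc)
  finally show "k \<otimes> g = g \<otimes> k" .
qed

lemma group_comm_swap:
  assumes x: "x \<in> carrier G" and y: "y \<in> carrier G"
  shows "group_comm G y x = inv (group_comm G x y)"
proof -
  have "group_comm G y x \<otimes> group_comm G x y = \<one>"
    unfolding group_comm_def using x y by (simp add: m_assoc)
  then have "inv (group_comm G x y) = group_comm G y x"
    by (rule inv_equality) (simp_all add: x y)
  then show ?thesis by simp
qed

lemma central_group_comm_swap:
  "x \<in> carrier G \<Longrightarrow> y \<in> carrier G \<Longrightarrow> central G (group_comm G x y) \<Longrightarrow> central G (group_comm G y x)"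
  using group_comm_swap central_inv by metis

lemma central_group_comm_inv_right:
  assumes x: "x \<in> carrier G" and y: "y \<in> carrier G" and c: "central G (group_comm G x y)"
  shows "central G (group_comm G x (inv y))"
proof -
  have c': "central G (group_comm G y x)" using central_group_comm_swap[OF x y c] .
  have "group_comm G x (inv y) = inv (inv y) \<otimes> group_comm G y x \<otimes> inv y"
    unfolding group_comm_def using x y by (simp add: m_assoc)
  also have "\<dots> = group_comm G y x" using central_conj[OF c' inv_closed[OF y]] .
  finally show ?thesis using c' by simp
qed

lemma central_group_comm_mult_right:
  assumes x: "x \<in> carrier G" and y: "y \<in> carrier G" and z: "z \<in> carrier G"
    and c1: "central G (group_comm G x y)" and c2: "central G (group_comm G x z)"
  shows "central G (group_comm G x (y \<otimes> z))"
proof -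
  have "group_comm G x (y \<otimes> z) = group_comm G x z \<otimes> (inv z \<otimes> group_comm G x y \<otimes> z)"
    unfolding group_comm_def using x y z by (simp add: m_assoc inv_mult_group)
  also have "\<dots> = group_comm G x z \<otimes> group_comm G x y" using central_conj[OF c1 z] by simp
  finally show ?thesis using central_mult[OF c2 c1] by simp
qed


lemma central_group_comm_generated:
  assumes H: "H \<subseteq> carrier G" and gen: "\<And>g. g \<in> carrier G \<Longrightarrow> \<exists>c \<in> H. \<exists>d \<in> H. g = c \<otimes> inv d"
    and x: "x \<in> carrier G" and y: "y \<in> carrier G"
    and central_H: "\<And>a. a \<in> H \<Longrightarrow> central G (group_comm G x a)"
  shows "central G (group_comm G x y)"
proof -
  obtain c d where cd: "c \<in> H" "d \<in> H" "y = c \<otimes> inv d" using gen[OF y] by blast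
  then have c: "c \<in> carrier G" and d: "d \<in> carrier G" using H by auto
  show ?thesis unfolding cd(3)
    using central_group_comm_mult_right[OF x c _ central_H[OF cd(1)]
        central_group_comm_inv_right[OF x d central_H[OF cd(2)]]] d by simp
qed

lemma nilpotent2_if_generated_malcev:
  assumes H: "H \<subseteq> carrier G" "\<one> \<in> H"
    and gen: "\<And>g. g \<in> carrier G \<Longrightarrow> \<exists>c \<in> H. \<exists>d \<in> H. g = c \<otimes> inv d"
    and malcev: "\<And>x y z. x \<in> H \<Longrightarrow> y \<in> H \<Longrightarrow> z \<in> H \<Longrightarrow>
      x \<otimes> y \<otimes> z \<otimes> y \<otimes> x = y \<otimes> x \<otimes> z \<otimes> x \<otimes> y"
  shows "nilpotent2_group G"
proof -
  \<comment> \<open>with \<open>u = ab\<close> and \<open>v = ba\<close>, the identity reads \<open>uzv = vzu\<close>, so \<open>[a, b] = v\<^sup>-\<^sup>1u\<close> commutes with \<open>H\<close>\<close>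
  have central_H: "central G (group_comm G a b)" if a: "a \<in> H" and b: "b \<in> H" for a b
  proof -
    have aC: "a \<in> carrier G" and bC: "b \<in> carrier G" using a b H by auto
    define u where "u = a \<otimes> b"
    define v where "v = b \<otimes> a"
    have u: "u \<in> carrier G" and v: "v \<in> carrier G" unfolding u_def v_def using aC bC by auto
    have uzv: "u \<otimes> z \<otimes> v = v \<otimes> z \<otimes> u" if "z \<in> H" for z
      using malcev[OF a b that] aC bC H that unfolding u_def v_def by (auto simp: m_assoc)
    have uv: "u \<otimes> v = v \<otimes> u" using uzv[OF H(2)] u v by simp
    have k: "group_comm G a b = inv v \<otimes> u"
      unfolding group_comm_def u_def v_def using aC bC by (simp add: m_assoc inv_mult_group)
    have "inv v \<otimes> u \<in> carrier G" using u v by simp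
    then show ?thesis unfolding k
    proof (rule centralI_generated[OF H(1) gen, rotated])
      fix z assume "z \<in> H"
      then have z: "z \<in> carrier G" using H by auto
      have "inv v \<otimes> u \<otimes> z = inv v \<otimes> (u \<otimes> z \<otimes> v) \<otimes> inv v"
        using u v z by (simp add: m_assoc)
      also have "\<dots> = z \<otimes> (u \<otimes> inv v)" using uzv[OF \<open>z \<in> H\<close>] u v z by (simp add: m_assoc)
      also have "u \<otimes> inv v = inv v \<otimes> u" using commute_inv[OF u v uv] .
      finally show "inv v \<otimes> u \<otimes> z = z \<otimes> (inv v \<otimes> u)" using u v z by (simp add: m_assoc)
    qed
  qed
  have central_H_G: "central G (group_comm G a y)" if a: "a \<in> H" and y: "y \<in> carrier G" for a y
    using a H by (intro central_group_comm_generated[OF H(1) gen _ y] central_H) auto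
  have "central G (group_comm G x y)" if x: "x \<in> carrier G" and y: "y \<in> carrier G" for x y
  proof -
    have "central G (group_comm G y a)" if "a \<in> H" for a
      using central_group_comm_swap[OF _ y central_H_G[OF that y]] that H by auto
    then have "central G (group_comm G y x)"
      using central_group_comm_generated[OF H(1) gen y x] by blast
    then show ?thesis by (rule central_group_comm_swap[OF y x])
  qed
  then show ?thesis unfolding nilpotent2_group_iff using is_group by blast
qed

end

section \<open>The group of right fractions\<close>

locale malcev_cancellative =
  fixes \<sigma> :: "('a::monoid_mult \<times> 'a) set"
  assumes cancellative: "cancellative_cong \<sigma>"
    and malcev: "\<And>x y z. (x * y * z * y * x, y * x * z * x * y) \<in> \<sigma>"
begin

definition equiv_mod :: "'a \<Rightarrow> 'a \<Rightarrow> bool" (infix "\<approx>" 50) where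
  "a \<approx> b \<longleftrightarrow> (a, b) \<in> \<sigma>"

lemma cong: "is_cong \<sigma>"
  using cancellative by (rule cancellative_cong_is_cong)

lemma equiv_mod_refl [simp]: "a \<approx> a"
  unfolding equiv_mod_def using cong by (rule is_cong_refl)

lemma equiv_mod_sym: "a \<approx> b \<Longrightarrow> b \<approx> a"
  unfolding equiv_mod_def using cong by (rule is_cong_sym)

lemma equiv_mod_trans [trans]: "a \<approx> b \<Longrightarrow> b \<approx> c \<Longrightarrow> a \<approx> c"
  unfolding equiv_mod_def using cong by (rule is_cong_trans)

lemma equiv_mod_mult_right: "a \<approx> b \<Longrightarrow> a * c \<approx> b * c"
  unfolding equiv_mod_def by (rule is_cong_mult[OF cong _ is_cong_refl[OF cong]])

lemma equiv_mod_mult_left: "a \<approx> b \<Longrightarrow> c * a \<approx> c * b"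
  unfolding equiv_mod_def by (rule is_cong_mult[OF cong is_cong_refl[OF cong]])

lemma equiv_mod_cancel_left: "c * a \<approx> c * b \<Longrightarrow> a \<approx> b"
  unfolding equiv_mod_def using cancellative by (rule cancellative_cong_cancel_left)

lemma equiv_mod_cancel_right: "a * c \<approx> b * c \<Longrightarrow> a \<approx> b"
  unfolding equiv_mod_def using cancellative by (rule cancellative_cong_cancel_right)

lemma ore: "c * (b * b * c) \<approx> b * (c * c * b)"
  using malcev[of c b 1] by (simp add: equiv_mod_def mult.assoc)

lemma ore_ex: "\<exists>u v. a * u \<approx> b * v"
  using ore by blast

text \<open>A pair \<open>(a, b)\<close> stands for the right fraction \<open>a b\<^sup>-\<^sup>1\<close>.\<close>

definition frac_equiv :: "'a \<times> 'a \<Rightarrow> 'a \<times> 'a \<Rightarrow> bool" where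
  "frac_equiv p q \<longleftrightarrow> (\<exists>u v. fst p * u \<approx> fst q * v \<and> snd p * u \<approx> snd q * v)"

lemma frac_equivI: "a * u \<approx> c * v \<Longrightarrow> b * u \<approx> d * v \<Longrightarrow> frac_equiv (a, b) (c, d)"
  unfolding frac_equiv_def by auto

lemma frac_equivE:
  assumes "frac_equiv (a, b) (c, d)"
  obtains u v where "a * u \<approx> c * v" "b * u \<approx> d * v"
  using assms unfolding frac_equiv_def by auto

lemma frac_equiv_scaleI: "a * r \<approx> c \<Longrightarrow> b * r \<approx> d \<Longrightarrow> frac_equiv (a, b) (c, d)"
  by (rule frac_equivI[of a r c 1]) simp_all

lemma frac_equiv_refl [simp]: "frac_equiv p p"
  unfolding frac_equiv_def by (rule exI[of _ 1], rule exI[of _ 1]) simp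

lemma frac_equiv_sym: "frac_equiv p q \<Longrightarrow> frac_equiv q p"
  unfolding frac_equiv_def by (blast intro: equiv_mod_sym)

lemma frac_equiv_trans [trans]:
  assumes "frac_equiv p q" "frac_equiv q w"
  shows "frac_equiv p w"
proof -
  obtain a b c d e f where pqw: "p = (a, b)" "q = (c, d)" "w = (e, f)" by (metis surj_pair)
  note assms = assms[unfolded pqw]
  obtain u v where uv: "a * u \<approx> c * v" "b * u \<approx> d * v" using assms(1) by (rule frac_equivE)
  obtain s t where st: "c * s \<approx> e * t" "d * s \<approx> f * t" using assms(2) by (rule frac_equivE)
  obtain x y where xy: "v * x \<approx> s * y" using ore_ex by blast
  have "a * (u * x) \<approx> c * (v * x)" using equiv_mod_mult_right[OF uv(1)] by (simp add: mult.assoc)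
  also have "\<dots> \<approx> c * (s * y)" using equiv_mod_mult_left[OF xy] .
  also have "\<dots> \<approx> e * (t * y)" using equiv_mod_mult_right[OF st(1)] by (simp add: mult.assoc)
  finally have fst: "a * (u * x) \<approx> e * (t * y)" .
  have "b * (u * x) \<approx> d * (v * x)" using equiv_mod_mult_right[OF uv(2)] by (simp add: mult.assoc)
  also have "\<dots> \<approx> d * (s * y)" using equiv_mod_mult_left[OF xy] .
  also have "\<dots> \<approx> f * (t * y)" using equiv_mod_mult_right[OF st(2)] by (simp add: mult.assoc)
  finally have snd: "b * (u * x) \<approx> f * (t * y)" .
  show ?thesis unfolding pqw using fst snd by (rule frac_equivI)
qed

text \<open>By \<open>ore\<close>, \<open>b\<^sup>-\<^sup>1 c = (c c b) (b b c)\<^sup>-\<^sup>1\<close>, whence the product below; any other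
  solution \<open>c q \<approx> b p\<close> gives an equivalent result.\<close>

definition frac_mul :: "'a \<times> 'a \<Rightarrow> 'a \<times> 'a \<Rightarrow> 'a \<times> 'a" where
  "frac_mul p q = (fst p * (fst q * fst q * snd p), snd q * (snd p * snd p * fst q))"

lemma frac_mul_simp: "frac_mul (a, b) (c, d) = (a * (c * c * b), d * (b * b * c))"
  by (simp add: frac_mul_def)

lemma frac_mul_witness:
  assumes "c * q \<approx> b * p"
  shows "frac_equiv (frac_mul (a, b) (c, d)) (a * p, d * q)"
proof -
  obtain r r' where rr: "(b * b * c) * r \<approx> q * r'" using ore_ex by blast
  have "b * ((c * c * b) * r) \<approx> c * ((b * b * c) * r)"
    using equiv_mod_mult_right[OF equiv_mod_sym[OF ore]] by (simp add: mult.assoc)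
  also have "\<dots> \<approx> c * (q * r')" using equiv_mod_mult_left[OF rr] .
  also have "\<dots> \<approx> b * (p * r')" using equiv_mod_mult_right[OF assms] by (simp add: mult.assoc)
  finally have "(c * c * b) * r \<approx> p * r'" by (rule equiv_mod_cancel_left)
  then have "a * (c * c * b) * r \<approx> a * p * r'"
    using equiv_mod_mult_left by (simp add: mult.assoc)
  moreover have "d * (b * b * c) * r \<approx> d * q * r'"
    using equiv_mod_mult_left[OF rr] by (simp add: mult.assoc)
  ultimately show ?thesis by (simp add: frac_mul_simp frac_equivI mult.assoc)
qed

lemma frac_mul_cong_left:
  assumes "frac_equiv (a, b) (a', b')"
  shows "frac_equiv (frac_mul (a, b) (c, d)) (frac_mul (a', b') (c, d))"
proof -
  obtain u v where uv: "a * u \<approx> a' * v" "b * u \<approx> b' * v" using assms by (rule frac_equivE)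
  obtain r s where rs: "(c * c * b) * r \<approx> u * s" using ore_ex by blast
  have "c * ((b * b * c) * r) \<approx> b * ((c * c * b) * r)"
    using equiv_mod_mult_right[OF ore] by (simp add: mult.assoc)
  also have "\<dots> \<approx> b * (u * s)" using equiv_mod_mult_left[OF rs] .
  also have "\<dots> \<approx> b' * (v * s)" using equiv_mod_mult_right[OF uv(2)] by (simp add: mult.assoc)
  finally have "frac_equiv (frac_mul (a', b') (c, d)) (a' * (v * s), d * ((b * b * c) * r))"
    by (rule frac_mul_witness)
  moreover have "a * (c * c * b) * r \<approx> a' * (v * s)"
  proof -
    have "a * (c * c * b) * r \<approx> a * (u * s)"
      using equiv_mod_mult_left[OF rs] by (simp add: mult.assoc)
    also have "\<dots> \<approx> a' * (v * s)" using equiv_mod_mult_right[OF uv(1)] by (simp add: mult.assoc)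
    finally show ?thesis .
  qed
  then have "frac_equiv (frac_mul (a, b) (c, d)) (a' * (v * s), d * ((b * b * c) * r))"
    by (auto intro: frac_equiv_scaleI[of _ r] simp: frac_mul_simp mult.assoc)
  ultimately show ?thesis by (metis frac_equiv_trans frac_equiv_sym)
qed

lemma frac_mul_cong_right:
  assumes "frac_equiv (c, d) (c', d')"
  shows "frac_equiv (frac_mul (a, b) (c, d)) (frac_mul (a, b) (c', d'))"
proof -
  obtain u v where uv: "c * u \<approx> c' * v" "d * u \<approx> d' * v" using assms by (rule frac_equivE)
  obtain r s where rs: "(b * b * c) * r \<approx> u * s" using ore_ex by blast
  have "c' * (v * s) \<approx> c * (u * s)"
    using equiv_mod_mult_right[OF equiv_mod_sym[OF uv(1)]] by (simp add: mult.assoc)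
  also have "\<dots> \<approx> c * ((b * b * c) * r)" using equiv_mod_mult_left[OF equiv_mod_sym[OF rs]] .
  also have "\<dots> \<approx> b * ((c * c * b) * r)" using equiv_mod_mult_right[OF ore] by (simp add: mult.assoc)
  finally have "frac_equiv (frac_mul (a, b) (c', d')) (a * ((c * c * b) * r), d' * (v * s))"
    by (rule frac_mul_witness)
  moreover have "d * (b * b * c) * r \<approx> d' * (v * s)"
  proof -
    have "d * (b * b * c) * r \<approx> d * (u * s)"
      using equiv_mod_mult_left[OF rs] by (simp add: mult.assoc)
    also have "\<dots> \<approx> d' * (v * s)" using equiv_mod_mult_right[OF uv(2)] by (simp add: mult.assoc)
    finally show ?thesis .
  qed
  then have "frac_equiv (frac_mul (a, b) (c, d)) (a * ((c * c * b) * r), d' * (v * s))"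
    by (auto intro: frac_equiv_scaleI[of _ r] simp: frac_mul_simp mult.assoc)
  ultimately show ?thesis by (metis frac_equiv_trans frac_equiv_sym)
qed

lemma frac_mul_cong:
  assumes "frac_equiv p p'" "frac_equiv q q'"
  shows "frac_equiv (frac_mul p q) (frac_mul p' q')"
proof -
  obtain a b a' b' c d c' d' where "p = (a, b)" "p' = (a', b')" "q = (c, d)" "q' = (c', d')"
    by (metis surj_pair)
  then show ?thesis
    using assms frac_mul_cong_left frac_mul_cong_right frac_equiv_trans by metis
qed

lemma frac_mul_assoc: "frac_equiv (frac_mul (frac_mul x y) z) (frac_mul x (frac_mul y z))"
proof -
  obtain a b c d e f where xyz: "x = (a, b)" "y = (c, d)" "z = (e, f)" by (metis surj_pair)
  define p q where "p = c * c * b" and "q = b * b * c"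
  define p' q' where "p' = e * e * (d * q)" and "q' = d * q * (d * q) * e"
  define t s where "t = e * e * d" and "s = d * d * e"
  have xy: "frac_mul (a, b) (c, d) = (a * p, d * q)" by (simp add: frac_mul_simp p_def q_def)
  have xy_z: "frac_mul (a * p, d * q) (e, f) = (a * p * p', f * q')"
    by (simp add: frac_mul_simp p'_def q'_def mult.assoc)
  have yz: "frac_mul (c, d) (e, f) = (c * t, f * s)" by (simp add: frac_mul_simp s_def t_def)
  have cq: "c * q \<approx> b * p" unfolding p_def q_def by (rule ore)
  have eq': "e * q' \<approx> d * q * p'" unfolding p'_def q'_def by (rule ore)
  have es: "e * s \<approx> d * t" unfolding s_def t_def by (rule ore)
  obtain r r' where rr: "q' * r \<approx> s * r'" using ore_ex by blast
  have "d * (q * p' * r) \<approx> e * (q' * r)"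
    using equiv_mod_mult_right[OF equiv_mod_sym[OF eq']] by (simp add: mult.assoc)
  also have "\<dots> \<approx> e * (s * r')" using equiv_mod_mult_left[OF rr] .
  also have "\<dots> \<approx> d * (t * r')" using equiv_mod_mult_right[OF es] by (simp add: mult.assoc)
  finally have "q * p' * r \<approx> t * r'" by (rule equiv_mod_cancel_left)
  then have "c * (t * r') \<approx> c * (q * p' * r)" by (rule equiv_mod_mult_left[OF equiv_mod_sym])
  also have "\<dots> \<approx> b * (p * p' * r)" using equiv_mod_mult_right[OF cq] by (simp add: mult.assoc)
  finally have "(c * t) * r' \<approx> b * (p * p' * r)" by (simp add: mult.assoc)
  then have "frac_equiv (frac_mul (a, b) (c * t, f * s)) (a * (p * p' * r), f * s * r')"
    by (rule frac_mul_witness)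
  moreover have "frac_equiv (a * p * p', f * q') (a * (p * p' * r), f * s * r')"
    by (rule frac_equiv_scaleI[of _ r])
      (simp_all add: mult.assoc equiv_mod_mult_left[OF rr, of f, simplified mult.assoc])
  moreover have "frac_equiv (frac_mul (frac_mul (a, b) (c, d)) (e, f)) (a * p * p', f * q')"
    unfolding xy xy_z[symmetric] by simp
  ultimately show ?thesis unfolding xyz yz by (metis frac_equiv_trans frac_equiv_sym)
qed

lemma frac_mul_one_left: "frac_equiv (frac_mul (1, 1) (c, d)) (c, d)"
  using frac_equiv_sym[OF frac_equiv_scaleI[of c c "c * c" d "d * c"]] by (simp add: frac_mul_simp)

lemma frac_mul_inverse_left: "frac_equiv (frac_mul (b, a) (a, b)) (1, 1)"
  unfolding frac_mul_simp by (rule frac_equivI[of _ 1 _ "b * (a * a * a)"]) simp_all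

text \<open>The theorem asks for a group on \<open>('a \<times> bool) list\<close>; a fraction class is encoded there by a
  chosen representative \<open>(a, b)\<close> as \<open>[(a, True), (b, True)]\<close>.\<close>

definition frac_class :: "'a \<times> 'a \<Rightarrow> ('a \<times> bool) list" where
  "frac_class p = (case SOME q. frac_equiv p q of (a, b) \<Rightarrow> [(a, True), (b, True)])"

definition frac_group :: "('a \<times> bool) list monoid" where
  "frac_group = \<lparr>carrier = range frac_class,
     mult = \<lambda>X Y. frac_class (frac_mul (SOME p. X = frac_class p) (SOME q. Y = frac_class q)),
     one = frac_class (1, 1)\<rparr>"

definition frac_embedding :: "'a \<Rightarrow> ('a \<times> bool) list" where
  "frac_embedding a = frac_class (a, 1)"

lemma frac_class_eq_iff: "frac_class p = frac_class q \<longleftrightarrow> frac_equiv p q"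
proof
  have rep: "frac_equiv p (SOME q. frac_equiv p q)" for p
    by (rule someI[of "frac_equiv p" p]) simp
  assume "frac_class p = frac_class q"
  then have "(SOME q'. frac_equiv p q') = (SOME q'. frac_equiv q q')"
    unfolding frac_class_def by (auto split: prod.splits)
  then show "frac_equiv p q"
    using rep[of p] rep[of q] by (metis frac_equiv_sym frac_equiv_trans)
next
  assume "frac_equiv p q"
  then have "frac_equiv p = frac_equiv q" by (blast intro: frac_equiv_trans frac_equiv_sym)
  then show "frac_class p = frac_class q" unfolding frac_class_def by simp
qed

lemma frac_group_mult: "frac_class p \<otimes>\<^bsub>frac_group\<^esub> frac_class q = frac_class (frac_mul p q)"
proof -
  have "frac_equiv (SOME p'. frac_class p = frac_class p') p" for p
    using someI[of "\<lambda>p'. frac_class p = frac_class p'" p] by (simp add: frac_class_eq_iff frac_equiv_sym)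
  then show ?thesis
    unfolding frac_group_def by (simp add: frac_class_eq_iff frac_mul_cong)
qed

lemma frac_group_carrier: "carrier frac_group = range frac_class"
  by (simp add: frac_group_def)

lemma frac_group_one: "\<one>\<^bsub>frac_group\<^esub> = frac_class (1, 1)"
  by (simp add: frac_group_def)

lemma group_frac_group: "group frac_group"
proof (rule groupI)
  fix X Y assume "X \<in> carrier frac_group" "Y \<in> carrier frac_group"
  then show "X \<otimes>\<^bsub>frac_group\<^esub> Y \<in> carrier frac_group"
    by (auto simp: frac_group_carrier frac_group_mult)
next
  show "\<one>\<^bsub>frac_group\<^esub> \<in> carrier frac_group"
    by (simp add: frac_group_carrier frac_group_one)
next
  fix X Y Z assume "X \<in> carrier frac_group" "Y \<in> carrier frac_group" "Z \<in> carrier frac_group"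
  then show "X \<otimes>\<^bsub>frac_group\<^esub> Y \<otimes>\<^bsub>frac_group\<^esub> Z = X \<otimes>\<^bsub>frac_group\<^esub> (Y \<otimes>\<^bsub>frac_group\<^esub> Z)"
    by (auto simp: frac_group_carrier frac_group_mult frac_class_eq_iff frac_mul_assoc)
next
  fix X assume "X \<in> carrier frac_group"
  then obtain c d where X: "X = frac_class (c, d)" by (auto simp: frac_group_carrier)
  show "\<one>\<^bsub>frac_group\<^esub> \<otimes>\<^bsub>frac_group\<^esub> X = X"
    unfolding X frac_group_one frac_group_mult frac_class_eq_iff by (rule frac_mul_one_left)
  have "frac_class (d, c) \<otimes>\<^bsub>frac_group\<^esub> X = \<one>\<^bsub>frac_group\<^esub>"
    unfolding X frac_group_one frac_group_mult frac_class_eq_iff by (rule frac_mul_inverse_left)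
  then show "\<exists>Y \<in> carrier frac_group. Y \<otimes>\<^bsub>frac_group\<^esub> X = \<one>\<^bsub>frac_group\<^esub>"
    by (auto simp: frac_group_carrier)
qed

interpretation frac: group frac_group
  by (rule group_frac_group)

lemma frac_embedding_mult:
  "frac_embedding (a * b) = frac_embedding a \<otimes>\<^bsub>frac_group\<^esub> frac_embedding b"
  unfolding frac_embedding_def frac_group_mult frac_class_eq_iff frac_mul_simp
  by (rule frac_equiv_scaleI[of _ b]) (simp_all add: mult.assoc)

lemma frac_embedding_eq_iff: "frac_embedding a = frac_embedding b \<longleftrightarrow> (a, b) \<in> \<sigma>"
proof
  assume "frac_embedding a = frac_embedding b"
  then obtain u v where "a * u \<approx> b * v" "u \<approx> v"
    unfolding frac_embedding_def frac_class_eq_iff by (auto elim: frac_equivE)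
  then have "a * u \<approx> b * u" by (metis equiv_mod_mult_left equiv_mod_sym equiv_mod_trans)
  then show "(a, b) \<in> \<sigma>" unfolding equiv_mod_def[symmetric] by (rule equiv_mod_cancel_right)
next
  assume "(a, b) \<in> \<sigma>"
  then show "frac_embedding a = frac_embedding b"
    unfolding frac_embedding_def frac_class_eq_iff
    by (intro frac_equivI[of _ 1 _ 1]) (simp_all add: equiv_mod_def)
qed

lemma frac_class_eq_quotient:
  "frac_class (a, b) = frac_embedding a \<otimes>\<^bsub>frac_group\<^esub> inv\<^bsub>frac_group\<^esub> (frac_embedding b)"
proof -
  have "frac_class (1, b) \<otimes>\<^bsub>frac_group\<^esub> frac_embedding b = \<one>\<^bsub>frac_group\<^esub>"
    unfolding frac_embedding_def frac_group_mult frac_group_one frac_class_eq_iff frac_mul_simp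
    by (rule frac_equivI[of _ 1 _ "b * b * b"]) (simp_all add: mult.assoc)
  then have "inv\<^bsub>frac_group\<^esub> (frac_embedding b) = frac_class (1, b)"
    by (rule frac.inv_equality) (simp_all add: frac_embedding_def frac_group_carrier)
  then show ?thesis by (simp add: frac_embedding_def frac_group_mult frac_mul_simp)
qed

lemma nilpotent2_frac_group: "nilpotent2_group frac_group"
proof (rule frac.nilpotent2_if_generated_malcev)
  show "range frac_embedding \<subseteq> carrier frac_group"
    by (auto simp: frac_embedding_def frac_group_carrier)
  show "\<one>\<^bsub>frac_group\<^esub> \<in> range frac_embedding"
    by (simp add: frac_embedding_def frac_group_one)
  show "\<exists>c \<in> range frac_embedding. \<exists>d \<in> range frac_embedding. X = c \<otimes>\<^bsub>frac_group\<^esub> inv\<^bsub>frac_group\<^esub> d"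
    if "X \<in> carrier frac_group" for X
    using that frac_class_eq_quotient by (auto simp: frac_group_carrier)
  show "X \<otimes>\<^bsub>frac_group\<^esub> Y \<otimes>\<^bsub>frac_group\<^esub> Z \<otimes>\<^bsub>frac_group\<^esub> Y \<otimes>\<^bsub>frac_group\<^esub> X
      = Y \<otimes>\<^bsub>frac_group\<^esub> X \<otimes>\<^bsub>frac_group\<^esub> Z \<otimes>\<^bsub>frac_group\<^esub> X \<otimes>\<^bsub>frac_group\<^esub> Y"
    if "X \<in> range frac_embedding" "Y \<in> range frac_embedding" "Z \<in> range frac_embedding" for X Y Z
    using that malcev by (auto simp: frac_embedding_mult[symmetric] frac_embedding_eq_iff)
qed

lemma quot_embeds_into_frac_group: "quot_embeds_into \<sigma> frac_group"
  unfolding quot_embeds_into_def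
proof (intro exI[of _ frac_embedding] conjI allI)
  show "frac_embedding x \<in> carrier frac_group" for x
    by (simp add: frac_embedding_def frac_group_carrier)
qed (simp_all only: frac_embedding_mult frac_embedding_eq_iff)

end

section \<open>Term conditions for kernels of maps into class-two groups\<close>

context group
begin

definition class2_normal_form :: "(bool \<Rightarrow> bool \<Rightarrow> bool \<Rightarrow> 'a) \<Rightarrow> bool" where
  "class2_normal_form F \<longleftrightarrow> (\<exists>A B C P Q R.
     (\<forall>i. A i \<in> carrier G \<and> B i \<in> carrier G \<and> C i \<in> carrier G) \<and>
     (\<forall>i j. central G (P i j) \<and> central G (Q i j) \<and> central G (R i j)) \<and>
     (\<forall>x1 x2 x3. F x1 x2 x3 = A x1 \<otimes> B x2 \<otimes> C x3 \<otimes> (P x1 x2 \<otimes> Q x1 x3 \<otimes> R x2 x3)))"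

lemma swap_right_by_comm:
  "x \<in> carrier G \<Longrightarrow> y \<in> carrier G \<Longrightarrow> z \<in> carrier G \<Longrightarrow>
     y \<otimes> (x \<otimes> z) = x \<otimes> (y \<otimes> (group_comm G y x \<otimes> z))"
  unfolding group_comm_def by (simp add: m_assoc)

lemma central_commute_central: "central G x \<Longrightarrow> central G y \<Longrightarrow> x \<otimes> y = y \<otimes> x"
  by (metis central_closed central_commute)

lemma central_left_commute_central:
  "central G x \<Longrightarrow> central G y \<Longrightarrow> z \<in> carrier G \<Longrightarrow> x \<otimes> (y \<otimes> z) = y \<otimes> (x \<otimes> z)"
  by (metis central_closed central_commute_central m_assoc)

lemma class2_normal_form_mult_identity:
  assumes C: "a \<in> carrier G" "b \<in> carrier G" "c \<in> carrier G" "a' \<in> carrier G" "b' \<in> carrier G" "c' \<in> carrier G"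
    and Z: "central G p" "central G q" "central G r" "central G p'" "central G q'" "central G r'"
    and K: "central G (group_comm G b a')" "central G (group_comm G c a')" "central G (group_comm G c b')"
  shows "a \<otimes> b \<otimes> c \<otimes> (p \<otimes> q \<otimes> r) \<otimes> (a' \<otimes> b' \<otimes> c' \<otimes> (p' \<otimes> q' \<otimes> r')) =
    (a \<otimes> a') \<otimes> (b \<otimes> b') \<otimes> (c \<otimes> c') \<otimes>
    ((p \<otimes> p' \<otimes> group_comm G b a') \<otimes> (q \<otimes> q' \<otimes> group_comm G c a') \<otimes> (r \<otimes> r' \<otimes> group_comm G c b'))"
proof -
  note ZC = Z[THEN central_closed] K[THEN central_closed]
  note s = swap_right_by_comm[OF C(4) C(3)] swap_right_by_comm[OF C(4) C(2)] swap_right_by_comm[OF C(5) C(3)]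
  note k = central_left_commute[OF Z(1) C(4)] central_left_commute[OF Z(1) C(5)]
    central_left_commute[OF Z(1) C(6)] central_left_commute[OF Z(2) C(4)]
    central_left_commute[OF Z(2) C(5)] central_left_commute[OF Z(2) C(6)]
    central_left_commute[OF Z(3) C(4)] central_left_commute[OF Z(3) C(5)]
    central_left_commute[OF Z(3) C(6)] central_left_commute[OF K(1) C(3)]
    central_left_commute[OF K(1) C(5)] central_left_commute[OF K(1) C(6)]
    central_left_commute[OF K(2) C(5)] central_left_commute[OF K(2) C(6)]
    central_left_commute[OF K(3) C(6)]
  show ?thesis using C ZC
    by (simp add: m_assoc s k central_commute_central central_left_commute_central Z K)
qed

lemma class2_normal_form_mult:
  assumes nilpotent: "\<And>x y. x \<in> carrier G \<Longrightarrow> y \<in> carrier G \<Longrightarrow> central G (group_comm G x y)"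
    and "class2_normal_form F" "class2_normal_form F'"
  shows "class2_normal_form (\<lambda>x1 x2 x3. F x1 x2 x3 \<otimes> F' x1 x2 x3)"
proof -
  obtain A B C P Q R where 1: "\<forall>i. A i \<in> carrier G \<and> B i \<in> carrier G \<and> C i \<in> carrier G"
     "\<forall>i j. central G (P i j) \<and> central G (Q i j) \<and> central G (R i j)"
     "\<forall>x1 x2 x3. F x1 x2 x3 = A x1 \<otimes> B x2 \<otimes> C x3 \<otimes> (P x1 x2 \<otimes> Q x1 x3 \<otimes> R x2 x3)"
    using assms(2) unfolding class2_normal_form_def by blast
  obtain A' B' C' P' Q' R' where 2: "\<forall>i. A' i \<in> carrier G \<and> B' i \<in> carrier G \<and> C' i \<in> carrier G"
     "\<forall>i j. central G (P' i j) \<and> central G (Q' i j) \<and> central G (R' i j)"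
     "\<forall>x1 x2 x3. F' x1 x2 x3 = A' x1 \<otimes> B' x2 \<otimes> C' x3 \<otimes> (P' x1 x2 \<otimes> Q' x1 x3 \<otimes> R' x2 x3)"
    using assms(3) unfolding class2_normal_form_def by blast
  show ?thesis unfolding class2_normal_form_def
  proof (intro exI conjI allI)
    fix i j
    show "A i \<otimes> A' i \<in> carrier G" "B i \<otimes> B' i \<in> carrier G" "C i \<otimes> C' i \<in> carrier G"
      using 1(1) 2(1) by auto
    show "central G (P i j \<otimes> P' i j \<otimes> group_comm G (B j) (A' i))"
      "central G (Q i j \<otimes> Q' i j \<otimes> group_comm G (C j) (A' i))"
      "central G (R i j \<otimes> R' i j \<otimes> group_comm G (C j) (B' i))"
      using 1 2 by (auto intro!: central_mult nilpotent)
  next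
    fix x1 x2 x3
    show "F x1 x2 x3 \<otimes> F' x1 x2 x3 = (A x1 \<otimes> A' x1) \<otimes> (B x2 \<otimes> B' x2) \<otimes> (C x3 \<otimes> C' x3) \<otimes>
      ((P x1 x2 \<otimes> P' x1 x2 \<otimes> group_comm G (B x2) (A' x1)) \<otimes>
       (Q x1 x3 \<otimes> Q' x1 x3 \<otimes> group_comm G (C x3) (A' x1)) \<otimes>
       (R x2 x3 \<otimes> R' x2 x3 \<otimes> group_comm G (C x3) (B' x2)))"
      unfolding 1(3)[rule_format] 2(3)[rule_format]
      by (rule class2_normal_form_mult_identity) (use 1 2 in \<open>auto intro!: nilpotent\<close>)
  qed
qed

lemma central_square_term_cond:
  assumes C: "c0 \<in> carrier G" "c1 \<in> carrier G"
    and Z: "\<And>i. central G (q i)" "\<And>i. central G (q' i)" "\<And>i. central G (r i)" "\<And>i. central G (r' i)"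
    and FF: "c0 \<otimes> (q False \<otimes> r False) = c1 \<otimes> (q' False \<otimes> r' False)"
    and FT: "c0 \<otimes> (q False \<otimes> r True) = c1 \<otimes> (q' False \<otimes> r' True)"
    and TF: "c0 \<otimes> (q True \<otimes> r False) = c1 \<otimes> (q' True \<otimes> r' False)"
  shows "c0 \<otimes> (q True \<otimes> r True) = c1 \<otimes> (q' True \<otimes> r' True)"
proof -
  note ZC = Z(1)[THEN central_closed] Z(2)[THEN central_closed] Z(3)[THEN central_closed]
    Z(4)[THEN central_closed]
  have "c1 \<otimes> (q' False \<otimes> r' True) = c0 \<otimes> (q False \<otimes> r False) \<otimes> (inv (r False) \<otimes> r True)"
    using FT C ZC by (simp add: m_assoc)
  also have "\<dots> = c1 \<otimes> (q' False \<otimes> (r' False \<otimes> (inv (r False) \<otimes> r True)))"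
    using FF C ZC by (simp add: m_assoc)
  finally have r': "r' True = r' False \<otimes> (inv (r False) \<otimes> r True)"
    using C ZC by simp
  have "c0 \<otimes> (q True \<otimes> r True) = c0 \<otimes> (q True \<otimes> r False) \<otimes> (inv (r False) \<otimes> r True)"
    using C ZC by (simp add: m_assoc)
  also have "\<dots> = c1 \<otimes> (q' True \<otimes> (r' False \<otimes> (inv (r False) \<otimes> r True)))"
    using TF C ZC by (simp add: m_assoc)
  finally show ?thesis using r' by simp
qed

lemma class2_normal_form_term_cond:
  assumes "class2_normal_form F"
    and "F False False False = F False False True" "F False True False = F False True True"
      "F True False False = F True False True"
  shows "F True True False = F True True True"
proof -
  obtain A B C P Q R where 1: "\<forall>i. A i \<in> carrier G \<and> B i \<in> carrier G \<and> C i \<in> carrier G"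
     "\<forall>i j. central G (P i j) \<and> central G (Q i j) \<and> central G (R i j)"
     and F: "\<And>x1 x2 x3. F x1 x2 x3 = A x1 \<otimes> B x2 \<otimes> C x3 \<otimes> (P x1 x2 \<otimes> Q x1 x3 \<otimes> R x2 x3)"
    using assms(1) unfolding class2_normal_form_def by blast
  have slice: "F x1 x2 False = F x1 x2 True \<longleftrightarrow>
      C False \<otimes> (Q x1 False \<otimes> R x2 False) = C True \<otimes> (Q x1 True \<otimes> R x2 True)" for x1 x2
  proof -
    have P: "central G (P x1 x2)" using 1 by blast
    have "F x1 x2 x3 = (A x1 \<otimes> B x2 \<otimes> P x1 x2) \<otimes> (C x3 \<otimes> (Q x1 x3 \<otimes> R x2 x3))" for x3
      using 1 unfolding F by (simp add: m_assoc central_left_commute[OF P] central_closed)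
    then show ?thesis using 1 P by (simp add: central_closed)
  qed
  have "C False \<otimes> (Q True False \<otimes> R True False) = C True \<otimes> (Q True True \<otimes> R True True)"
    by (rule central_square_term_cond[where q = "\<lambda>i. Q i False" and q' = "\<lambda>i. Q i True"
          and r = "\<lambda>i. R i False" and r' = "\<lambda>i. R i True"])
      (use 1 assms(2-4) slice in auto)
  then show ?thesis using slice by blast
qed

end

locale nilpotent2_embedding = group +
  fixes h :: "'m::monoid_mult \<Rightarrow> 'a"
  assumes comm_central: "u \<in> carrier G \<Longrightarrow> v \<in> carrier G \<Longrightarrow> central G (group_comm G u v)"
    and hom_closed [simp]: "h x \<in> carrier G"
    and hom_mult: "h (x * y) = h x \<otimes> h y"
begin

definition mod_center :: "('m \<times> 'm) set" where
  "mod_center = {(a, b). central G (inv (h a) \<otimes> h b)}"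

lemma cancellative_mod_center: "cancellative_cong mod_center"
  unfolding cancellative_cong_def
proof (intro conjI allI impI)
  show "is_cong mod_center"
  proof (rule is_congI)
    show "(a, a) \<in> mod_center" for a by (simp add: mod_center_def central_one)
  next
    fix a b assume "(a, b) \<in> mod_center"
    then have "central G (inv (inv (h a) \<otimes> h b))" by (simp add: mod_center_def central_inv)
    then show "(b, a) \<in> mod_center" by (simp add: mod_center_def inv_mult_group)
  next
    fix a b c assume "(a, b) \<in> mod_center" "(b, c) \<in> mod_center"
    then have "central G ((inv (h a) \<otimes> h b) \<otimes> (inv (h b) \<otimes> h c))"
      by (simp add: mod_center_def central_mult)
    then show "(a, c) \<in> mod_center" by (simp add: mod_center_def m_assoc)
  next
    fix a b c d assume ab: "(a, b) \<in> mod_center" and cd: "(c, d) \<in> mod_center"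
    then have k: "central G (inv (h a) \<otimes> h b)" "central G (inv (h c) \<otimes> h d)"
      by (simp_all add: mod_center_def)
    have "inv (h (a * c)) \<otimes> h (b * d) = inv (h c) \<otimes> ((inv (h a) \<otimes> h b) \<otimes> h d)"
      by (simp add: hom_mult m_assoc inv_mult_group)
    also have "\<dots> = (inv (h a) \<otimes> h b) \<otimes> (inv (h c) \<otimes> h d)"
      by (simp add: central_left_commute[OF k(1)])
    finally show "(a * c, b * d) \<in> mod_center"
      using central_mult[OF k] by (simp add: mod_center_def)
  qed
next
  fix a b c assume "(a * c, b * c) \<in> mod_center"
  then have "central G (inv (h c) \<otimes> (inv (h a) \<otimes> h b) \<otimes> h c)"
    by (simp add: mod_center_def hom_mult inv_mult_group m_assoc)
  then have "central G (inv (inv (h c)) \<otimes> (inv (h c) \<otimes> (inv (h a) \<otimes> h b) \<otimes> h c) \<otimes> inv (h c))"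
    using central_conj[of _ "inv (h c)"] by simp
  then show "(a, b) \<in> mod_center" by (simp add: mod_center_def m_assoc)
next
  fix a b c assume "(c * a, c * b) \<in> mod_center"
  then show "(a, b) \<in> mod_center"
    by (simp add: mod_center_def hom_mult inv_mult_group m_assoc)
qed

lemma commutative_mod_center: "(a * b, b * a) \<in> mod_center"
  unfolding mod_center_def
  using comm_central[of "h b" "h a"] by (simp add: hom_mult group_comm_def inv_mult_group m_assoc)

lemma commutator2_subset_mod_center: "commutator [\<alpha>, \<beta>] \<subseteq> mod_center"
  using cancellative_mod_center commutative_mod_center
  by (intro commutator_least term_cond2_if_commutative cancellative_cong_is_cong)

lemma comm_M_central_difference:
  assumes "f \<in> comm_M \<alpha>s" "i < length \<alpha>s" "\<alpha>s ! i \<subseteq> mod_center"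
  shows "\<exists>z. central G z \<and>
    (\<forall>x. length x = length \<alpha>s \<longrightarrow> h (f (x[i := True])) = h (f (x[i := False])) \<otimes> z)"
  using assms(1)
proof (induction rule: comm_M_induct)
  case (gen j a b)
  show ?case
  proof (cases "j = i")
    case True
    with gen assms(3) have "central G (inv (h a) \<otimes> h b)" by (auto simp: mod_center_def)
    with True assms(2) show ?thesis by (intro exI[of _ "inv (h a) \<otimes> h b"]) auto
  next
    case False
    then show ?thesis by (intro exI[of _ \<one>]) (simp add: central_one)
  qed
next
  case (mult f g)
  then obtain z z' where z: "central G z" "\<forall>x. length x = length \<alpha>s \<longrightarrow> h (f (x[i := True])) = h (f (x[i := False])) \<otimes> z"
    and z': "central G z'" "\<forall>x. length x = length \<alpha>s \<longrightarrow> h (g (x[i := True])) = h (g (x[i := False])) \<otimes> z'"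
    by blast
  show ?case
    by (rule exI[of _ "z \<otimes> z'"])
      (use z z' in \<open>simp add: hom_mult central_mult m_assoc central_left_commute[OF z(1)] central_closed\<close>)
qed

lemma term_cond_commutator_left: "term_cond [commutator [\<alpha>, \<beta>], \<gamma>] {(x, y). h x = h y}"
  unfolding term_cond2_iff
proof (intro ballI impI)
  fix f assume f: "f \<in> comm_M [commutator [\<alpha>, \<beta>], \<gamma>]"
    and "(f [False, False], f [False, True]) \<in> {(x, y). h x = h y}"
  then have FF_FT: "h (f [False, False]) = h (f [False, True])" by simp
  obtain z where z: "central G z"
    "\<forall>x. length x = 2 \<longrightarrow> h (f (x[0 := True])) = h (f (x[0 := False])) \<otimes> z"
    using comm_M_central_difference[OF f, of 0] commutator2_subset_mod_center by auto
  then have "h (f [True, False]) = h (f [False, False]) \<otimes> z" "h (f [True, True]) = h (f [False, True]) \<otimes> z"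
    using spec[OF z(2), of "[False, False]"] spec[OF z(2), of "[False, True]"] by simp_all
  then show "(f [True, False], f [True, True]) \<in> {(x, y). h x = h y}" using FF_FT by simp
qed

lemma term_cond_commutator_right: "term_cond [\<gamma>, commutator [\<alpha>, \<beta>]] {(x, y). h x = h y}"
  unfolding term_cond2_iff
proof (intro ballI impI)
  fix f assume f: "f \<in> comm_M [\<gamma>, commutator [\<alpha>, \<beta>]]"
    and "(f [False, False], f [False, True]) \<in> {(x, y). h x = h y}"
  then have FF_FT: "h (f [False, False]) = h (f [False, True])" by simp
  obtain z where z: "central G z"
    "\<forall>x. length x = 2 \<longrightarrow> h (f (x[1 := True])) = h (f (x[1 := False])) \<otimes> z"
    using comm_M_central_difference[OF f, of 1] commutator2_subset_mod_center by auto
  then have "h (f [False, True]) = h (f [False, False]) \<otimes> z" "h (f [True, True]) = h (f [True, False]) \<otimes> z"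
    using spec[OF z(2), of "[False, False]"] spec[OF z(2), of "[True, False]"] by simp_all
  moreover have "z = \<one>" using calculation(1) FF_FT z(1) by (simp add: central_closed)
  ultimately show "(f [True, False], f [True, True]) \<in> {(x, y). h x = h y}" by simp
qed

lemma comm_M_class2_normal_form:
  assumes "f \<in> comm_M [\<alpha>, \<beta>, \<gamma>]"
  shows "class2_normal_form (\<lambda>x1 x2 x3. h (f [x1, x2, x3]))"
  using assms
proof (induction rule: comm_M_induct)
  case (gen i a b)
  let ?g = "\<lambda>x. h (if x then b else a)" and ?one = "\<lambda>_. \<one>" and ?one2 = "\<lambda>_ _. \<one>"
  have "i = 0 \<or> i = 1 \<or> i = 2" using gen by (auto simp: less_Suc_eq)
  then show ?case
  proof (elim disjE)
    assume "i = 0"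
    then show ?thesis unfolding class2_normal_form_def
      by (intro exI[of _ ?g] exI[of _ ?one] exI[of _ ?one2]) (simp add: central_one)
  next
    assume "i = 1"
    then show ?thesis unfolding class2_normal_form_def
      by (intro exI[of _ ?one] exI[of _ ?g] exI[of _ ?one] exI[of _ ?one2]) (simp add: central_one)
  next
    assume "i = 2"
    then show ?thesis unfolding class2_normal_form_def
      by (intro exI[of _ ?one] exI[of _ ?g] exI[of _ ?one2]) (simp add: central_one)
  qed
next
  case (mult f g)
  then show ?case using class2_normal_form_mult[OF comm_central] by (simp add: hom_mult)
qed

lemma term_cond3_kernel: "term_cond [\<alpha>, \<beta>, \<gamma>] {(x, y). h x = h y}"
  unfolding term_cond3_iff
  using class2_normal_form_term_cond[OF comm_M_class2_normal_form] by simp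

end

lemma quot_embeds_into_nilpotent2E:
  assumes "nilpotent2_group G" "quot_embeds_into \<delta> G"
  obtains h where "nilpotent2_embedding G h" "\<delta> = {(x, y). h x = h y}"
proof -
  obtain h where h: "\<forall>x. h x \<in> carrier G" "\<forall>x y. h (x * y) = h x \<otimes>\<^bsub>G\<^esub> h y"
      "\<forall>x y. h x = h y \<longleftrightarrow> (x, y) \<in> \<delta>"
    using assms(2) unfolding quot_embeds_into_def by blast
  have "nilpotent2_embedding G h"
    using assms(1) h unfolding nilpotent2_embedding_def nilpotent2_embedding_axioms_def nilpotent2_group_iff
    by blast
  moreover have "\<delta> = {(x, y). h x = h y}" using h(3) by auto
  ultimately show ?thesis by (rule that)
qed

context
  fixes G :: "('g, 'b) monoid_scheme" and \<delta> :: "('m::monoid_mult \<times> 'm) set"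
  assumes nilpotent: "nilpotent2_group G" and embeds: "quot_embeds_into \<delta> G"
begin

lemma commutator_subset_if_embeds:
  assumes "\<And>h. nilpotent2_embedding G h \<Longrightarrow> term_cond \<alpha>s {(x, y). h x = h y}"
  shows "commutator \<alpha>s \<subseteq> \<delta>"
proof -
  obtain h where h: "nilpotent2_embedding G h" and \<delta>: "\<delta> = {(x, y). h x = h y}"
    using nilpotent embeds by (rule quot_embeds_into_nilpotent2E)
  show ?thesis unfolding \<delta>
    by (rule commutator_least[OF is_cong_kernel assms[OF h]]) (rule nilpotent2_embedding.hom_mult[OF h])
qed

lemma commutator3_subset_if_embeds: "commutator [\<alpha>, \<beta>, \<gamma>] \<subseteq> \<delta>"
  by (rule commutator_subset_if_embeds) (rule nilpotent2_embedding.term_cond3_kernel)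

lemma commutator_comm_left_subset_if_embeds: "commutator [commutator [\<alpha>, \<beta>], \<gamma>] \<subseteq> \<delta>"
  by (rule commutator_subset_if_embeds) (rule nilpotent2_embedding.term_cond_commutator_left)

lemma commutator_comm_right_subset_if_embeds: "commutator [\<gamma>, commutator [\<alpha>, \<beta>]] \<subseteq> \<delta>"
  by (rule commutator_subset_if_embeds) (rule nilpotent2_embedding.term_cond_commutator_right)

end

lemma commutator3_total_subset_if_malcev:
  assumes "cancellative_cong \<sigma>" "\<And>x y z. (x * y * z * y * x, y * x * z * x * y) \<in> \<sigma>"
  shows "commutator [total_cong, total_cong, total_cong] \<subseteq> \<sigma>"
proof -
  interpret malcev_cancellative \<sigma> using assms by unfold_locales
  show ?thesis
    using nilpotent2_frac_group quot_embeds_into_frac_group by (rule commutator3_subset_if_embeds)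
qed

lemma commutator3_total_embeds:
  "\<exists>G :: ('a \<times> bool) list monoid.
     nilpotent2_group G \<and> quot_embeds_into (commutator [total_cong, total_cong, total_cong :: ('a::monoid_mult \<times> 'a) set]) G"
proof -
  interpret malcev_cancellative "commutator [total_cong, total_cong, total_cong] :: ('a \<times> 'a) set"
    using cancellative_commutator3_total malcev_in_commutator3_total by unfold_locales
  show ?thesis using nilpotent2_frac_group quot_embeds_into_frac_group by blast
qed

lemma commutator3_total_eq_canc_gen:
  assumes "R \<subseteq> commutator [total_cong, total_cong, total_cong]"
    and "\<And>x y z. (x * y * z * y * x, y * x * z * x * y) \<in> R"
  shows "commutator [total_cong, total_cong, total_cong] = canc_gen R"
proof (rule canc_gen_eqI[OF cancellative_commutator3_total assms(1)])
  show "commutator [total_cong, total_cong, total_cong] \<subseteq> \<sigma>"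
    if "cancellative_cong \<sigma>" "R \<subseteq> \<sigma>" for \<sigma>
    using that(1) by (rule commutator3_total_subset_if_malcev) (use that(2) assms(2) in blast)
qed

lemma commutator_comm_left_total_subset:
  "commutator [commutator [total_cong, total_cong], total_cong]
     \<subseteq> (commutator [total_cong, total_cong, total_cong] :: ('a::monoid_mult \<times> 'a) set)"
  using commutator3_total_embeds commutator_comm_left_subset_if_embeds by blast

lemma commutator_comm_right_total_subset:
  "commutator [total_cong, commutator [total_cong, total_cong]]
     \<subseteq> (commutator [total_cong, total_cong, total_cong] :: ('a::monoid_mult \<times> 'a) set)"
  using commutator3_total_embeds commutator_comm_right_subset_if_embeds by blast

lemma malcev_in_rho2: "(x * y * z * y * x, y * x * z * x * y) \<in> rho2"
  unfolding rho2_def by (rule subsetD[OF cong_gen_upper]) blast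

lemma rho2_subset_commutator3_total: "rho2 \<subseteq> commutator [total_cong, total_cong, total_cong]"
  unfolding rho2_def
  by (rule cong_gen_least[OF is_cong_commutator]) (use malcev_in_commutator3_total in blast)

theorem corollary4p7:
  fixes T :: "('a::monoid_mult \<times> 'a) set"
  defines "T \<equiv> commutator [total_cong, total_cong, total_cong]"
  shows "(\<exists>G :: ('a \<times> bool) list monoid. nilpotent2_group G \<and> quot_embeds_into T G)
         \<and> (\<forall>\<delta> (G :: 'g monoid). is_cong \<delta> \<and> nilpotent2_group G \<and> quot_embeds_into \<delta> G
              \<longrightarrow> T \<subseteq> \<delta>)
         \<and> T = canc_gen (cong_join (commutator [commutator [total_cong, total_cong], total_cong])
                                    (commutator [total_cong, commutator [total_cong, total_cong]]))
         \<and> T = canc_gen (commutator [commutator [total_cong, total_cong], total_cong])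
         \<and> T = canc_gen rho2"
proof -
  let ?T = "commutator [total_cong, total_cong, total_cong] :: ('a \<times> 'a) set"
  let ?CU = "commutator [commutator [total_cong, total_cong], total_cong] :: ('a \<times> 'a) set"
  let ?UC = "commutator [total_cong, commutator [total_cong, total_cong]] :: ('a \<times> 'a) set"
  have join: "cong_join ?CU ?UC \<subseteq> ?T"
    unfolding cong_join_def using commutator_comm_left_total_subset commutator_comm_right_total_subset
    by (intro cong_gen_least[OF is_cong_commutator]) blast
  have malcev_join: "(x * y * z * y * x, y * x * z * x * y) \<in> cong_join ?CU ?UC" for x y z
    unfolding cong_join_def
    by (rule subsetD[OF cong_gen_upper UnI1]) (rule malcev_in_commutator_comm_total)
  show ?thesis unfolding T_def
  proof (intro conjI allI impI)
    show "\<exists>G :: ('a \<times> bool) list monoid. nilpotent2_group G \<and> quot_embeds_into ?T G"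
      by (rule commutator3_total_embeds)
    show "?T \<subseteq> \<delta>" if "is_cong \<delta> \<and> nilpotent2_group G \<and> quot_embeds_into \<delta> G" for \<delta> and G :: "'g monoid"
      using that commutator3_subset_if_embeds[of G \<delta>] by blast
    show "?T = canc_gen (cong_join ?CU ?UC)"
      using join malcev_join by (rule commutator3_total_eq_canc_gen)
    show "?T = canc_gen ?CU"
      using commutator_comm_left_total_subset malcev_in_commutator_comm_total
      by (rule commutator3_total_eq_canc_gen)
    show "?T = canc_gen rho2"
      using rho2_subset_commutator3_total malcev_in_rho2 by (rule commutator3_total_eq_canc_gen)
  qed
qed

end
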